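(* Assume $\mathsf{X}=\mathsf{Y}$ is finite and $D\ge0$ with $\mathcal{G}(D)\neq\emptyset$. Let $P^*_{X,Y}\in\mathcal{G}(D)$ attain $I(\mu\|\psi,D)=\min\{I(X;Y):P_{X,Y}\in\mathcal{G}(D)\}$, and let $H^*(Y|X)$ be the conditional entropy under $P^*_{X,Y}$. Then for every $R_c\ge H^*(Y|X)$, $$\min\{R:(R,R_c)\in\mathcal{L}(D)\}=I(\mu\|\psi,D),$$ and $\{R:(R,R_c)\in\mathcal{L}(D)\}=\{R: R\ge I(\mu\|\psi,D)\}$, which is also the set of $R$ for which $(R,R_c')\in\mathcal{L}(D)$ for some $R_c'$ arbitrarily large.
   Context: $\mathsf{X}=\mathsf{Y}$ finite, $\rho$ a distortion measure, $\mu,\psi$ distributions on $\mathsf{X}$. $\mathcal{G}(D):=\{P_{X,Y}: P_X=\mu,\ P_Y=\psi,\ \mathbb{E}[\rho(X,Y)]\le D\}$. $\mathcal{M}(D):=\{P_{X,Y,U}: P_X=\mu,\ P_Y=\psi,\ \mathbb{E}[\rho(X,Y)]\le D,\ X-U-Y\text{ Markov},\ |\mathsf{U}|\le|\mathsf{X}|+|\mathsf{Y}|+1\}$, and $\mathcal{L}(D):=\{(R,R_c)\in\mathbb{R}^2:\exists P_{X,Y,U}\in\mathcal{M}(D)\text{ with } R\ge I(X;U),\ R+R_c\ge I(Y;U)\}$. *)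

theory Defs
  imports "HOL-Analysis.Analysis"
begin

(* Finite alphabets: X = Y is the finite type 'a; the auxiliary alphabet U is
   {..< u_bound TYPE('a)} (a set of naturals), i.e. |U| <= |X| + |Y| + 1.
   Distributions are nonnegative real-valued mass functions. *)

definition is_dist :: "('a::finite \<Rightarrow> real) \<Rightarrow> bool" where
  "is_dist p \<longleftrightarrow> (\<forall>x. 0 \<le> p x) \<and> (\<Sum>x\<in>UNIV. p x) = 1"

definition mutual_info :: "'b set \<Rightarrow> 'c set \<Rightarrow> ('b \<Rightarrow> 'c \<Rightarrow> real) \<Rightarrow> real" where
  "mutual_info A B Q =
     (\<Sum>a\<in>A. \<Sum>b\<in>B. if Q a b > 0
        then Q a b * log 2 (Q a b / ((\<Sum>b'\<in>B. Q a b') * (\<Sum>a'\<in>A. Q a' b)))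
        else 0)"

definition cond_entropy :: "('a::finite \<Rightarrow> 'b::finite \<Rightarrow> real) \<Rightarrow> real" where
  "cond_entropy Q =
     - (\<Sum>x\<in>UNIV. \<Sum>y\<in>UNIV. if Q x y > 0
          then Q x y * log 2 (Q x y / (\<Sum>y'\<in>UNIV. Q x y'))
          else 0)"

definition G_set :: "('a::finite \<Rightarrow> 'a \<Rightarrow> real) \<Rightarrow> ('a \<Rightarrow> real) \<Rightarrow> ('a \<Rightarrow> real) \<Rightarrow> real
                      \<Rightarrow> ('a \<Rightarrow> 'a \<Rightarrow> real) set" where
  "G_set \<rho> \<mu> \<psi> D = {P. (\<forall>x y. 0 \<le> P x y)
                       \<and> (\<forall>x. (\<Sum>y\<in>UNIV. P x y) = \<mu> x)
                       \<and> (\<forall>y. (\<Sum>x\<in>UNIV. P x y) = \<psi> y)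
                       \<and> (\<Sum>x\<in>UNIV. \<Sum>y\<in>UNIV. P x y * \<rho> x y) \<le> D}"

definition u_bound :: "'a::finite itself \<Rightarrow> nat" where
  "u_bound _ = CARD('a) + CARD('a) + 1"

definition marg_XU :: "('a::finite \<Rightarrow> nat \<Rightarrow> 'a \<Rightarrow> real) \<Rightarrow> 'a \<Rightarrow> nat \<Rightarrow> real" where
  "marg_XU P x u = (\<Sum>y\<in>UNIV. P x u y)"

definition marg_UY :: "('a::finite \<Rightarrow> nat \<Rightarrow> 'a \<Rightarrow> real) \<Rightarrow> nat \<Rightarrow> 'a \<Rightarrow> real" where
  "marg_UY P u y = (\<Sum>x\<in>UNIV. P x u y)"

definition marg_U :: "('a::finite \<Rightarrow> nat \<Rightarrow> 'a \<Rightarrow> real) \<Rightarrow> nat \<Rightarrow> real" where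
  "marg_U P u = (\<Sum>x\<in>UNIV. \<Sum>y\<in>UNIV. P x u y)"

definition M_set :: "('a::finite \<Rightarrow> 'a \<Rightarrow> real) \<Rightarrow> ('a \<Rightarrow> real) \<Rightarrow> ('a \<Rightarrow> real) \<Rightarrow> real
                      \<Rightarrow> ('a \<Rightarrow> nat \<Rightarrow> 'a \<Rightarrow> real) set" where
  "M_set \<rho> \<mu> \<psi> D = {P. (\<forall>x u y. 0 \<le> P x u y)
      \<and> (\<forall>x u y. u \<ge> u_bound TYPE('a) \<longrightarrow> P x u y = 0)
      \<and> (\<forall>x. (\<Sum>u<u_bound TYPE('a). \<Sum>y\<in>UNIV. P x u y) = \<mu> x)
      \<and> (\<forall>y. (\<Sum>x\<in>UNIV. \<Sum>u<u_bound TYPE('a). P x u y) = \<psi> y)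
      \<and> (\<Sum>x\<in>UNIV. \<Sum>u<u_bound TYPE('a). \<Sum>y\<in>UNIV. P x u y * \<rho> x y) \<le> D
      \<and> (\<forall>x u y. P x u y * marg_U P u = marg_XU P x u * marg_UY P u y)}"

definition L_set :: "('a::finite \<Rightarrow> 'a \<Rightarrow> real) \<Rightarrow> ('a \<Rightarrow> real) \<Rightarrow> ('a \<Rightarrow> real) \<Rightarrow> real
                      \<Rightarrow> (real \<times> real) set" where
  "L_set \<rho> \<mu> \<psi> D = {(R, Rc). \<exists>P\<in>M_set \<rho> \<mu> \<psi> D.
       R \<ge> mutual_info UNIV {..<u_bound TYPE('a)} (marg_XU P)
     \<and> R + Rc \<ge> mutual_info {..<u_bound TYPE('a)} UNIV (marg_UY P)}"

end

theory Submission
  imports Defs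
begin

text \<open>
  Achievability: take the auxiliary variable to be a copy of \<open>Y\<close> itself.  Then
  \<open>I(X;U) = I(X;Y)\<close> and \<open>I(U;Y) = H(Y) = I(X;Y) + H(Y|X)\<close>, so the optimal coupling
  \<open>P*\<close> yields every pair with \<open>R \<ge> I(\<mu>\<parallel>\<psi>,D)\<close> and \<open>R\<^sub>c \<ge> H*(Y|X)\<close>.
  Converse: for any \<open>X - U - Y\<close> in \<open>\<M>(D)\<close> the \<open>(X,Y)\<close>-marginal lies in \<open>\<G>(D)\<close>, and by the
  data processing inequality \<open>I(X;Y) \<le> I(X;U) \<le> R\<close>.  The data processing inequality
  is Gibbs' inequality comparing the chain with the distribution in which \<open>X\<close> and \<open>U\<close>
  are conditionally independent given \<open>Y\<close>.
\<close>

lemma diff_le_mult_log_div: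
  fixes p q :: real
  assumes p: "0 \<le> p" and q: "0 \<le> q" and supp: "0 < p \<Longrightarrow> 0 < q"
  shows "(p - q) / ln 2 \<le> p * log 2 (p / q)"
proof (cases "p = 0")
  case True
  then show ?thesis using q by simp
next
  case False
  with p supp have "0 < p" "0 < q" by auto
  then have "ln (q / p) \<le> q / p - 1" by (intro ln_le_minus_one) simp
  then have "p - q \<le> p * ln (p / q)"
    using \<open>0 < p\<close> \<open>0 < q\<close> by (simp add: ln_div field_simps)
  then show ?thesis by (simp add: log_def divide_right_mono)
qed

lemma mutual_info_eq_sum:
  assumes "\<And>a b. a \<in> A \<Longrightarrow> b \<in> B \<Longrightarrow> 0 \<le> Q a b"
  shows "mutual_info A B Q =
    (\<Sum>a\<in>A. \<Sum>b\<in>B. Q a b * log 2 (Q a b / ((\<Sum>b'\<in>B. Q a b') * (\<Sum>a'\<in>A. Q a' b))))"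
  unfolding mutual_info_def by (intro sum.cong refl) (use assms in \<open>force simp: le_less\<close>)

lemma mutual_info_swap:
  "mutual_info B A (\<lambda>b a. Q a b) = mutual_info A B Q"
  unfolding mutual_info_def by (subst sum.swap) (intro sum.cong refl, simp add: mult.commute)

lemma mutual_info_reindex:
  assumes "finite B" "inj_on h A" "h ` A \<subseteq> B" "\<And>b c. b \<in> B - h ` A \<Longrightarrow> Q b c = 0"
  shows "mutual_info B C Q = mutual_info A C (\<lambda>a. Q (h a))"
proof -
  have sum_B: "(\<Sum>b\<in>B. f b) = (\<Sum>a\<in>A. f (h a))" if "\<And>b. b \<in> B - h ` A \<Longrightarrow> f b = 0"
    for f :: "_ \<Rightarrow> real"
  proof -
    have "(\<Sum>b\<in>B. f b) = (\<Sum>b\<in>h ` A. f b)"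
      using assms(1,3) that by (intro sum.mono_neutral_right) auto
    also have "\<dots> = (\<Sum>a\<in>A. f (h a))" using assms(2) by (rule sum.reindex_cong) auto
    finally show ?thesis .
  qed
  have column: "(\<Sum>b\<in>B. Q b c) = (\<Sum>a\<in>A. Q (h a) c)" for c
    by (rule sum_B) (simp add: assms(4))
  show ?thesis unfolding mutual_info_def column
    by (rule sum_B) (simp add: assms(4))
qed

lemma mutual_info_diagonal:
  assumes "finite A" "\<forall>a\<in>A. 0 \<le> p a"
  shows "mutual_info A A (\<lambda>a b. if a = b then p a else 0) = - (\<Sum>a\<in>A. p a * log 2 (p a))"
proof -
  let ?Q = "\<lambda>a b. if a = b then p a else 0"
  have "mutual_info A A ?Q
      = (\<Sum>a\<in>A. \<Sum>b\<in>A. ?Q a b * log 2 (?Q a b / ((\<Sum>b'\<in>A. ?Q a b') * (\<Sum>a'\<in>A. ?Q a' b))))"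
    by (rule mutual_info_eq_sum) (use assms in auto)
  also have "\<dots> = (\<Sum>a\<in>A. \<Sum>b\<in>A. if b = a then - (p a * log 2 (p a)) else 0)"
  proof (intro sum.cong refl)
    fix a b assume "a \<in> A" "b \<in> A"
    then show "?Q a b * log 2 (?Q a b / ((\<Sum>b'\<in>A. ?Q a b') * (\<Sum>a'\<in>A. ?Q a' b)))
        = (if b = a then - (p a * log 2 (p a)) else 0)"
      using assms by (cases "p a = 0") (auto simp: log_divide_pos log_mult_pos le_less)
  qed
  finally show ?thesis using assms(1) by (simp add: sum_negf)
qed

lemma cond_entropy_eq_sum:
  assumes "\<And>x y. 0 \<le> Q x y"
  shows "cond_entropy Q = - (\<Sum>x\<in>UNIV. \<Sum>y\<in>UNIV. Q x y * log 2 (Q x y / (\<Sum>y'\<in>UNIV. Q x y')))"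
proof -
  have "(if Q x y > 0 then Q x y * L else 0) = Q x y * L" for x y L
    using assms[of x y] by auto
  then show ?thesis unfolding cond_entropy_def by simp
qed

lemma mutual_info_add_cond_entropy:
  fixes Q :: "'a::finite \<Rightarrow> 'b::finite \<Rightarrow> real"
  assumes nonneg: "\<And>x y. 0 \<le> Q x y"
  shows "mutual_info UNIV UNIV Q + cond_entropy Q = - (\<Sum>y\<in>UNIV. (\<Sum>x\<in>UNIV. Q x y) * log 2 (\<Sum>x\<in>UNIV. Q x y))"
proof -
  define \<mu> where "\<mu> x = (\<Sum>y\<in>UNIV. Q x y)" for x
  define \<psi> where "\<psi> y = (\<Sum>x\<in>UNIV. Q x y)" for y
  have pointwise: "Q x y * log 2 (Q x y / (\<mu> x * \<psi> y)) - Q x y * log 2 (Q x y / \<mu> x) = - (Q x y * log 2 (\<psi> y))"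
    for x y
  proof (cases "Q x y = 0")
    case False
    then have "0 < Q x y" using nonneg[of x y] by simp
    moreover have "Q x y \<le> \<mu> x" "Q x y \<le> \<psi> y"
      unfolding \<mu>_def \<psi>_def using nonneg by (auto intro: member_le_sum)
    ultimately show ?thesis by (simp add: log_divide_pos log_mult_pos algebra_simps)
  qed simp
  have "mutual_info UNIV UNIV Q + cond_entropy Q
      = (\<Sum>x\<in>UNIV. \<Sum>y\<in>UNIV. Q x y * log 2 (Q x y / (\<mu> x * \<psi> y)) - Q x y * log 2 (Q x y / \<mu> x))"
    unfolding mutual_info_eq_sum[OF nonneg] cond_entropy_eq_sum[OF nonneg] \<mu>_def \<psi>_def
    by (simp add: sum_subtractf)
  also have "\<dots> = - (\<Sum>y\<in>UNIV. \<Sum>x\<in>UNIV. Q x y * log 2 (\<psi> y))"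
    unfolding pointwise by (subst sum.swap) (simp add: sum_negf)
  also have "\<dots> = - (\<Sum>y\<in>UNIV. \<psi> y * log 2 (\<psi> y))"
    unfolding \<psi>_def by (simp add: sum_distrib_right)
  finally show ?thesis unfolding \<psi>_def .
qed

text \<open>The auxiliary alphabet is \<open>{..<u_bound TYPE('a)}\<close>, so \<open>U = Y\<close> is realised through an
  injection \<open>h\<close> of the alphabet into it.\<close>

definition copy_Y_to_U :: "('a \<Rightarrow> nat) \<Rightarrow> ('a \<Rightarrow> 'a \<Rightarrow> real) \<Rightarrow> 'a \<Rightarrow> nat \<Rightarrow> 'a \<Rightarrow> real" where
  "copy_Y_to_U h Q x u y = (if u = h y then Q x y else 0)"

context
  fixes h :: "'a::finite \<Rightarrow> nat" and Q :: "'a \<Rightarrow> 'a \<Rightarrow> real"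
  assumes inj: "inj h"
begin

lemma marg_XU_copy_Y_to_U: "marg_XU (copy_Y_to_U h Q) x (h y) = Q x y"
  unfolding marg_XU_def copy_Y_to_U_def using inj by (simp add: inj_eq)

lemma marg_UY_copy_Y_to_U:
  "marg_UY (copy_Y_to_U h Q) (h a) b = (if a = b then (\<Sum>x\<in>UNIV. Q x a) else 0)"
  unfolding marg_UY_def copy_Y_to_U_def using inj by (simp add: inj_eq)

lemma marg_U_copy_Y_to_U: "marg_U (copy_Y_to_U h Q) (h y) = (\<Sum>x\<in>UNIV. Q x y)"
  unfolding marg_U_def copy_Y_to_U_def using inj by (simp add: inj_eq)

end

lemma copy_Y_to_U_outside_range: "u \<notin> range h \<Longrightarrow> copy_Y_to_U h Q x u y = 0"
  unfolding copy_Y_to_U_def by auto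

lemma copy_Y_to_U_in_M_set:
  fixes h :: "'a::finite \<Rightarrow> nat"
  assumes inj: "inj h" and bound: "\<And>y. h y < u_bound TYPE('a)" and QG: "Q \<in> G_set \<rho> \<mu> \<psi> D"
  shows "copy_Y_to_U h Q \<in> M_set \<rho> \<mu> \<psi> D"
proof -
  let ?P = "copy_Y_to_U h Q" and ?n = "u_bound TYPE('a)"
  have sum_U: "(\<Sum>u<?n. ?P x u y) = Q x y" for x y
    unfolding copy_Y_to_U_def using bound[of y] by simp
  have Markov: "?P x u y * marg_U ?P u = marg_XU ?P x u * marg_UY ?P u y" for x u y
  proof (cases "u \<in> range h")
    case True
    then obtain a where "u = h a" by blast
    then show ?thesis using inj
      by (simp add: marg_XU_copy_Y_to_U marg_UY_copy_Y_to_U marg_U_copy_Y_to_U copy_Y_to_U_def inj_eq)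
  next
    case False
    then show ?thesis by (simp add: marg_XU_def copy_Y_to_U_outside_range)
  qed
  have Q_nonneg: "0 \<le> Q x y" and Q_row: "(\<Sum>y\<in>UNIV. Q x y) = \<mu> x"
    and Q_col: "(\<Sum>x\<in>UNIV. Q x y) = \<psi> y"
    and Q_dist: "(\<Sum>x\<in>UNIV. \<Sum>y\<in>UNIV. Q x y * \<rho> x y) \<le> D" for x y
    using QG unfolding G_set_def by auto
  show ?thesis unfolding M_set_def mem_Collect_eq
  proof (intro conjI allI impI)
    show "0 \<le> ?P x u y" for x u y unfolding copy_Y_to_U_def using Q_nonneg by simp
    show "?P x u y = 0" if "?n \<le> u" for x u y
      unfolding copy_Y_to_U_def using that bound[of y] by auto
    show "(\<Sum>u<?n. \<Sum>y\<in>UNIV. ?P x u y) = \<mu> x" for x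
      by (subst sum.swap) (simp add: sum_U Q_row)
    show "(\<Sum>x\<in>UNIV. \<Sum>u<?n. ?P x u y) = \<psi> y" for y
      by (simp add: sum_U Q_col)
    have "(\<Sum>x\<in>UNIV. \<Sum>u<?n. \<Sum>y\<in>UNIV. ?P x u y * \<rho> x y) = (\<Sum>x\<in>UNIV. \<Sum>y\<in>UNIV. Q x y * \<rho> x y)"
      by (subst sum.swap) (simp add: sum_distrib_right[symmetric] sum_U)
    then show "(\<Sum>x\<in>UNIV. \<Sum>u<?n. \<Sum>y\<in>UNIV. ?P x u y * \<rho> x y) \<le> D"
      using Q_dist by simp
    show "?P x u y * marg_U ?P u = marg_XU ?P x u * marg_UY ?P u y" for x u y
      by (rule Markov)
  qed
qed

lemma ex_inj_below_u_bound: "\<exists>h :: 'a::finite \<Rightarrow> nat. inj h \<and> (\<forall>y. h y < u_bound TYPE('a))"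
proof -
  obtain h :: "'a \<Rightarrow> nat" where h: "bij_betw h UNIV {0..<CARD('a)}"
    using ex_bij_betw_finite_nat[of "UNIV :: 'a set"] by auto
  have "h y < u_bound TYPE('a)" for y unfolding u_bound_def using bij_betw_apply[OF h, of y] by simp
  then show ?thesis using bij_betw_imp_inj_on[OF h] by blast
qed

lemma rate_pair_in_L_set:
  fixes Q :: "'a::finite \<Rightarrow> 'a \<Rightarrow> real"
  assumes QG: "Q \<in> G_set \<rho> \<mu> \<psi> D"
    and R: "mutual_info UNIV UNIV Q \<le> R" and Rc: "cond_entropy Q \<le> Rc"
  shows "(R, Rc) \<in> L_set \<rho> \<mu> \<psi> D"
proof -
  obtain h :: "'a \<Rightarrow> nat" where inj: "inj h" and bound: "\<And>y. h y < u_bound TYPE('a)"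
    using ex_inj_below_u_bound by blast
  let ?P = "copy_Y_to_U h Q" and ?n = "u_bound TYPE('a)"
  have Q_nonneg: "0 \<le> Q x y" for x y using QG unfolding G_set_def by auto
  have range_h: "h ` UNIV \<subseteq> {..<?n}" using bound by auto
  have I_XU: "mutual_info UNIV {..<?n} (marg_XU ?P) = mutual_info UNIV UNIV Q"
  proof -
    have "mutual_info UNIV {..<?n} (marg_XU ?P) = mutual_info {..<?n} UNIV (\<lambda>u x. marg_XU ?P x u)"
      by (rule mutual_info_swap[symmetric])
    also have "\<dots> = mutual_info UNIV UNIV (\<lambda>a x. marg_XU ?P x (h a))"
      using inj range_h
      by (intro mutual_info_reindex) (auto simp: marg_XU_def copy_Y_to_U_outside_range)
    also have "\<dots> = mutual_info UNIV UNIV Q"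
      unfolding marg_XU_copy_Y_to_U[OF inj] by (rule mutual_info_swap)
    finally show ?thesis .
  qed
  have diagonal: "(\<lambda>a. marg_UY ?P (h a)) = (\<lambda>a b. if a = b then (\<Sum>x\<in>UNIV. Q x a) else 0)"
    by (intro ext) (simp add: marg_UY_copy_Y_to_U[OF inj])
  have "mutual_info {..<?n} UNIV (marg_UY ?P)
      = mutual_info UNIV UNIV (\<lambda>a b. if a = b then (\<Sum>x\<in>UNIV. Q x a) else 0)"
    unfolding diagonal[symmetric] using inj range_h
    by (intro mutual_info_reindex) (auto simp: marg_UY_def copy_Y_to_U_outside_range)
  also have "\<dots> = mutual_info UNIV UNIV Q + cond_entropy Q"
    by (simp add: mutual_info_diagonal sum_nonneg Q_nonneg mutual_info_add_cond_entropy)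
  finally have I_UY: "mutual_info {..<?n} UNIV (marg_UY ?P) = mutual_info UNIV UNIV Q + cond_entropy Q" .
  show ?thesis
    unfolding L_set_def using copy_Y_to_U_in_M_set[OF inj bound QG] I_XU I_UY R Rc by force
qed

definition marg_XY :: "('a::finite \<Rightarrow> nat \<Rightarrow> 'a \<Rightarrow> real) \<Rightarrow> 'a \<Rightarrow> 'a \<Rightarrow> real" where
  "marg_XY P x y = (\<Sum>u<u_bound TYPE('a). P x u y)"

lemma M_setD:
  fixes P :: "'a::finite \<Rightarrow> nat \<Rightarrow> 'a \<Rightarrow> real"
  assumes "P \<in> M_set \<rho> \<mu> \<psi> D"
  shows M_set_nonneg: "0 \<le> P x u y"
    and M_set_vanish: "u_bound TYPE('a) \<le> u \<Longrightarrow> P x u y = 0"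
    and M_set_marg_X: "(\<Sum>u<u_bound TYPE('a). \<Sum>y\<in>UNIV. P x u y) = \<mu> x"
    and M_set_marg_Y: "(\<Sum>x\<in>UNIV. \<Sum>u<u_bound TYPE('a). P x u y) = \<psi> y"
    and M_set_distortion: "(\<Sum>x\<in>UNIV. \<Sum>u<u_bound TYPE('a). \<Sum>y\<in>UNIV. P x u y * \<rho> x y) \<le> D"
    and M_set_Markov: "P x u y * marg_U P u = marg_XU P x u * marg_UY P u y"
  using assms unfolding M_set_def by blast+

lemma marg_XY_in_G_set:
  assumes PM: "P \<in> M_set \<rho> \<mu> \<psi> D"
  shows "marg_XY P \<in> G_set \<rho> \<mu> \<psi> D"
proof -
  let ?n = "u_bound TYPE('a)"
  have "(\<Sum>y\<in>UNIV. marg_XY P x y) = \<mu> x" for x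
    unfolding marg_XY_def using M_set_marg_X[OF PM, of x] by (metis sum.swap)
  moreover have "(\<Sum>x\<in>UNIV. marg_XY P x y) = \<psi> y" for y
    unfolding marg_XY_def by (rule M_set_marg_Y[OF PM])
  moreover have "(\<Sum>x\<in>UNIV. \<Sum>y\<in>UNIV. marg_XY P x y * \<rho> x y)
      = (\<Sum>x\<in>UNIV. \<Sum>u<?n. \<Sum>y\<in>UNIV. P x u y * \<rho> x y)"
    unfolding marg_XY_def by (simp add: sum_distrib_right sum.swap[of _ UNIV "{..<?n}"])
  ultimately show ?thesis
    using M_set_distortion[OF PM] M_set_nonneg[OF PM]
    unfolding G_set_def marg_XY_def by (auto intro: sum_nonneg)
qed

lemma M_set_support:
  fixes P :: "'a::finite \<Rightarrow> nat \<Rightarrow> 'a \<Rightarrow> real"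
  assumes PM: "P \<in> M_set \<rho> \<mu> \<psi> D" and pos: "0 < P x u y"
  shows "0 < marg_XU P x u" "0 < marg_U P u" "0 < marg_UY P u y" "0 < \<mu> x" "0 < \<psi> y"
    "0 < marg_XY P x y"
proof -
  let ?n = "u_bound TYPE('a)"
  note nonneg = M_set_nonneg[OF PM]
  have u: "u < ?n"
  proof (rule ccontr)
    assume "\<not> u < ?n"
    then have "P x u y = 0" by (simp add: M_set_vanish[OF PM])
    with pos show False by simp
  qed
  have "P x u y \<le> marg_XU P x u" unfolding marg_XU_def by (rule member_le_sum) (auto intro: nonneg)
  then show XU: "0 < marg_XU P x u" using pos by linarith
  have "marg_XU P x u \<le> marg_U P u" unfolding marg_XU_def marg_U_def
    by (rule member_le_sum) (auto intro: nonneg sum_nonneg)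
  then show "0 < marg_U P u" using XU by linarith
  have "P x u y \<le> marg_UY P u y" unfolding marg_UY_def by (rule member_le_sum) (auto intro: nonneg)
  then show "0 < marg_UY P u y" using pos by linarith
  have "marg_XU P x u \<le> \<mu> x" unfolding M_set_marg_X[OF PM, of x, symmetric] marg_XU_def
    using u by (intro member_le_sum) (auto intro: nonneg sum_nonneg)
  then show "0 < \<mu> x" using XU by linarith
  have "P x u y \<le> marg_XY P x y" unfolding marg_XY_def using u by (intro member_le_sum) (auto intro: nonneg)
  then show XY: "0 < marg_XY P x y" using pos by linarith
  have "marg_XY P x y \<le> (\<Sum>x'\<in>UNIV. marg_XY P x' y)"
    by (rule member_le_sum) (auto simp: marg_XY_def intro: nonneg sum_nonneg)
  also have "\<dots> = \<psi> y" unfolding marg_XY_def by (rule M_set_marg_Y[OF PM])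
  finally show "0 < \<psi> y" using XY by linarith
qed

lemma sum_cond_indep_given_Y:
  fixes P :: "'a::finite \<Rightarrow> nat \<Rightarrow> 'a \<Rightarrow> real"
  assumes PM: "P \<in> M_set \<rho> \<mu> \<psi> D"
  defines "n \<equiv> u_bound TYPE('a)"
  shows "(\<Sum>x\<in>UNIV. \<Sum>u<n. \<Sum>y\<in>UNIV. marg_UY P u y * marg_XY P x y / \<psi> y)
       = (\<Sum>x\<in>UNIV. \<Sum>u<n. \<Sum>y\<in>UNIV. P x u y)"
proof -
  have col_UY: "(\<Sum>u<n. marg_UY P u y) = \<psi> y" for y
    unfolding marg_UY_def n_def by (subst sum.swap) (rule M_set_marg_Y[OF PM])
  have col_XY: "(\<Sum>x\<in>UNIV. marg_XY P x y) = \<psi> y" for y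
    using M_set_marg_Y[OF PM, of y] unfolding marg_XY_def n_def .
  have factor: "(\<Sum>u<n. marg_UY P u y) * (\<Sum>x\<in>UNIV. marg_XY P x y) / \<psi> y
      = (\<Sum>u<n. \<Sum>x\<in>UNIV. marg_UY P u y * marg_XY P x y / \<psi> y)" for y
    by (simp add: sum_distrib_left sum_distrib_right sum_divide_distrib sum.swap[of _ "{..<n}" UNIV])
  have "(\<Sum>x\<in>UNIV. \<Sum>u<n. \<Sum>y\<in>UNIV. marg_UY P u y * marg_XY P x y / \<psi> y)
      = (\<Sum>u<n. \<Sum>y\<in>UNIV. \<Sum>x\<in>UNIV. marg_UY P u y * marg_XY P x y / \<psi> y)"
    by (subst sum.swap) (rule sum.cong[OF refl], rule sum.swap)
  also have "\<dots> = (\<Sum>y\<in>UNIV. (\<Sum>u<n. marg_UY P u y) * (\<Sum>x\<in>UNIV. marg_XY P x y) / \<psi> y)"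
    unfolding factor by (rule sum.swap)
  also have "\<dots> = (\<Sum>y\<in>UNIV. \<psi> y)" unfolding col_UY col_XY by simp
  also have "\<dots> = (\<Sum>x\<in>UNIV. \<Sum>u<n. \<Sum>y\<in>UNIV. P x u y)"
    unfolding M_set_marg_Y[OF PM, symmetric] n_def
    by (subst sum.swap) (rule sum.cong[OF refl], rule sum.swap)
  finally show ?thesis .
qed

lemma mutual_info_marg_XY_le_marg_XU:
  fixes P :: "'a::finite \<Rightarrow> nat \<Rightarrow> 'a \<Rightarrow> real"
  assumes PM: "P \<in> M_set \<rho> \<mu> \<psi> D"
  shows "mutual_info UNIV UNIV (marg_XY P) \<le> mutual_info UNIV {..<u_bound TYPE('a)} (marg_XU P)"
proof -
  let ?n = "u_bound TYPE('a)"
  define q where "q x u y = marg_UY P u y * marg_XY P x y / \<psi> y" for x u y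
    \<comment> \<open>the reversed chain \<open>X - Y - U\<close>; it has the same total mass as \<open>P\<close>\<close>
  define i_XU where "i_XU x u = log 2 (marg_XU P x u / (\<mu> x * marg_U P u))" for x u
  define i_XY where "i_XY x y = log 2 (marg_XY P x y / (\<mu> x * \<psi> y))" for x y
  note nonneg = M_set_nonneg[OF PM]
  have "mutual_info UNIV {..<?n} (marg_XU P) = (\<Sum>x\<in>UNIV. \<Sum>u<?n. marg_XU P x u * i_XU x u)"
    unfolding i_XU_def M_set_marg_X[OF PM, symmetric]
    by (subst mutual_info_eq_sum) (auto simp: marg_XU_def marg_U_def intro: nonneg sum_nonneg)
  then have I_XU: "mutual_info UNIV {..<?n} (marg_XU P) = (\<Sum>x\<in>UNIV. \<Sum>u<?n. \<Sum>y\<in>UNIV. P x u y * i_XU x u)"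
    by (simp add: marg_XU_def sum_distrib_right)
  have "mutual_info UNIV UNIV (marg_XY P) = (\<Sum>x\<in>UNIV. \<Sum>y\<in>UNIV. marg_XY P x y * i_XY x y)"
    using marg_XY_in_G_set[OF PM] unfolding i_XY_def G_set_def
    by (subst mutual_info_eq_sum) auto
  then have I_XY: "mutual_info UNIV UNIV (marg_XY P) = (\<Sum>x\<in>UNIV. \<Sum>u<?n. \<Sum>y\<in>UNIV. P x u y * i_XY x y)"
    by (simp add: marg_XY_def sum_distrib_right sum.swap[of _ UNIV "{..<?n}"])
  have pointwise: "(P x u y - q x u y) / ln 2 \<le> P x u y * i_XU x u - P x u y * i_XY x y" for x u y
  proof (cases "P x u y = 0")
    case True
    have "0 \<le> \<psi> y" unfolding M_set_marg_Y[OF PM, of y, symmetric] by (intro sum_nonneg nonneg)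
    then have "0 \<le> q x u y" unfolding q_def marg_UY_def marg_XY_def
      by (intro divide_nonneg_nonneg mult_nonneg_nonneg sum_nonneg nonneg)
    then show ?thesis using True by simp
  next
    case False
    then have pos: "0 < P x u y" using nonneg[of x u y] by simp
    note support = M_set_support[OF PM pos]
    have "log 2 (P x u y * marg_U P u) = log 2 (marg_XU P x u * marg_UY P u y)"
      by (simp add: M_set_Markov[OF PM])
    then have "i_XU x u - i_XY x y = log 2 (P x u y / q x u y)"
      unfolding i_XU_def i_XY_def q_def using pos support
      by (simp add: log_divide_pos log_mult_pos)
    moreover have "(P x u y - q x u y) / ln 2 \<le> P x u y * log 2 (P x u y / q x u y)"
      using pos support unfolding q_def by (intro diff_le_mult_log_div) auto
    ultimately show ?thesis by (metis right_diff_distrib)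
  qed
  have "0 = (\<Sum>x\<in>UNIV. \<Sum>u<?n. \<Sum>y\<in>UNIV. (P x u y - q x u y) / ln 2)"
    using sum_cond_indep_given_Y[OF PM]
    by (simp add: q_def sum_subtractf sum_divide_distrib[symmetric])
  also have "\<dots> \<le> (\<Sum>x\<in>UNIV. \<Sum>u<?n. \<Sum>y\<in>UNIV. P x u y * i_XU x u - P x u y * i_XY x y)"
    by (intro sum_mono pointwise)
  also have "\<dots> = mutual_info UNIV {..<?n} (marg_XU P) - mutual_info UNIV UNIV (marg_XY P)"
    unfolding I_XU I_XY by (simp add: sum_subtractf)
  finally show ?thesis by simp
qed

lemma L_set_rate_lower_bound:
  assumes Pstar_min: "\<forall>P\<in>G_set \<rho> \<mu> \<psi> D. mutual_info UNIV UNIV Pstar \<le> mutual_info UNIV UNIV P"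
    and RRc: "(R, Rc) \<in> L_set \<rho> \<mu> \<psi> D"
  shows "mutual_info UNIV UNIV Pstar \<le> R"
proof -
  obtain P where PM: "P \<in> M_set \<rho> \<mu> \<psi> D"
    and R: "mutual_info UNIV {..<u_bound TYPE('a)} (marg_XU P) \<le> R"
    using RRc unfolding L_set_def by blast
  have "mutual_info UNIV UNIV Pstar \<le> mutual_info UNIV UNIV (marg_XY P)"
    using Pstar_min marg_XY_in_G_set[OF PM] by blast
  also have "\<dots> \<le> mutual_info UNIV {..<u_bound TYPE('a)} (marg_XU P)"
    by (rule mutual_info_marg_XY_le_marg_XU[OF PM])
  finally show ?thesis using R by linarith
qed

theorem mainTheorem8:
  fixes \<rho> :: "'a::finite \<Rightarrow> 'a \<Rightarrow> real"
    and \<mu> \<psi> :: "'a \<Rightarrow> real"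
    and D :: real
    and Pstar :: "'a \<Rightarrow> 'a \<Rightarrow> real"
  assumes rho_nonneg: "\<forall>x y. 0 \<le> \<rho> x y"
    and mu: "is_dist \<mu>" and psi: "is_dist \<psi>"
    and D: "0 \<le> D"
    and G_ne: "G_set \<rho> \<mu> \<psi> D \<noteq> {}"
    and Pstar_in: "Pstar \<in> G_set \<rho> \<mu> \<psi> D"
    and Pstar_min: "\<forall>P\<in>G_set \<rho> \<mu> \<psi> D. mutual_info UNIV UNIV Pstar \<le> mutual_info UNIV UNIV P"
  shows "\<forall>Rc. Rc \<ge> cond_entropy Pstar \<longrightarrow>
           (mutual_info UNIV UNIV Pstar \<in> {R. (R, Rc) \<in> L_set \<rho> \<mu> \<psi> D}
            \<and> (\<forall>R\<in>{R. (R, Rc) \<in> L_set \<rho> \<mu> \<psi> D}. mutual_info UNIV UNIV Pstar \<le> R)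
            \<and> {R. (R, Rc) \<in> L_set \<rho> \<mu> \<psi> D} = {R. R \<ge> mutual_info UNIV UNIV Pstar}
            \<and> {R. \<exists>Rc'. (R, Rc') \<in> L_set \<rho> \<mu> \<psi> D} = {R. R \<ge> mutual_info UNIV UNIV Pstar})"
proof (intro allI impI)
  \<comment> \<open>only \<open>Pstar_in\<close> and \<open>Pstar_min\<close> are needed\<close>
  fix Rc assume Rc: "cond_entropy Pstar \<le> Rc"
  let ?I = "mutual_info UNIV UNIV Pstar" and ?L = "L_set \<rho> \<mu> \<psi> D"
  have achievable: "(R, Rc) \<in> ?L" if "?I \<le> R" for R
    using rate_pair_in_L_set[OF Pstar_in that Rc] .
  have converse: "?I \<le> R" if "(R, Rc') \<in> ?L" for R Rc'
    using L_set_rate_lower_bound[OF Pstar_min that] .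
  have "{R. (R, Rc) \<in> ?L} = {R. R \<ge> ?I}" and "{R. \<exists>Rc'. (R, Rc') \<in> ?L} = {R. R \<ge> ?I}"
    using achievable converse by blast+
  then show "?I \<in> {R. (R, Rc) \<in> ?L} \<and> (\<forall>R\<in>{R. (R, Rc) \<in> ?L}. ?I \<le> R)
      \<and> {R. (R, Rc) \<in> ?L} = {R. R \<ge> ?I} \<and> {R. \<exists>Rc'. (R, Rc') \<in> ?L} = {R. R \<ge> ?I}"
    by auto
qed

end
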